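(* Let $X',X''$ be a disjoint cover of an index set $X$ (with nonempty value sets for each index), $\Pi':=\Pi X'$, $\Pi'':=\Pi X''$. Suppose that for every set $A$ (among subsets of $\Pi'$, $\Pi''$ and $\Pi' \times\Pi''$) a notion "big subset of $A$" is given such that $A\subseteq A$ is big and, whenever $B\subseteq C\subseteq A$ and $B\subseteq A$ is big, $C\subseteq A$ is big; call $B\subseteq A$ small iff $A-B\subseteq A$ is big. Assume (S*1): for all $\Sigma'\subseteq\Pi'$, $\Sigma''\subseteq\Pi''$ and $\Delta\subseteq\Sigma'\times\Sigma''$, $\Delta\subseteq\Sigma'\times\Sigma''$ is big iff there are $\Gamma'\subseteq\Sigma'$ big and $\Gamma''\subseteq\Sigma''$ big with $\Gamma'\times\Gamma''\subseteq\Delta$. Then for all $\Gamma'\subseteq\Sigma'\subseteq\Pi'$ and $\Gamma''\subseteq\Sigma''\subseteq\Pi''$: $\Gamma'\times\Gamma''\subseteq\Sigma'\times\Sigma''$ is small iff $\Gamma'\subseteq\Sigma'$ is small or $\Gamma''\subseteq\Sigma''$ is small.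
   Context: $\Pi X$ denotes the product of the value sets over the indices in $X$; $\Pi X=\Pi X'\times\Pi X''$ up to re-ordering. *)

theory Defs
  imports Main "HOL-Library.FuncSet"
begin

definition small :: "('a set \<Rightarrow> 'a set \<Rightarrow> bool) \<Rightarrow> 'a set \<Rightarrow> 'a set \<Rightarrow> bool" where
  "small big B A \<longleftrightarrow> big (A - B) A"

end

theory Submission
  imports Defs
begin

text \<open>Under (S*1) the complement of \<open>\<Gamma>' \<times> \<Gamma>''\<close> is big iff it contains a rectangle \<open>G' \<times> G''\<close> of
  big sets. Such a rectangle avoids \<open>\<Gamma>' \<times> \<Gamma>''\<close> iff one side avoids its \<open>\<Gamma>\<close>, and upward closure
  then makes that complement \<open>\<Sigma> - \<Gamma>\<close> big. Conversely, pairing a big \<open>\<Sigma>' - \<Gamma>'\<close> with the big set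
  \<open>\<Sigma>''\<close> (or vice versa) gives a rectangle in the complement. Neither the decomposition of the
  index set nor the axioms for bigness in the product are needed.\<close>

lemma Times_subset_Diff_Times_iff:
  assumes "G1 \<subseteq> S1" "G2 \<subseteq> S2"
  shows "G1 \<times> G2 \<subseteq> S1 \<times> S2 - A \<times> B \<longleftrightarrow> G1 \<subseteq> S1 - A \<or> G2 \<subseteq> S2 - B"
  using assms by blast

lemma small_Times_iff:
  assumes big12_iff: "big12 (S1 \<times> S2 - G1 \<times> G2) (S1 \<times> S2) \<longleftrightarrow>
      (\<exists>H1 H2. H1 \<subseteq> S1 \<and> H2 \<subseteq> S2 \<and> big1 H1 S1 \<and> big2 H2 S2 \<and> H1 \<times> H2 \<subseteq> S1 \<times> S2 - G1 \<times> G2)"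
    and refl1: "big1 S1 S1" and refl2: "big2 S2 S2"
    and mono1: "\<And>H. H \<subseteq> S1 - G1 \<Longrightarrow> big1 H S1 \<Longrightarrow> big1 (S1 - G1) S1"
    and mono2: "\<And>H. H \<subseteq> S2 - G2 \<Longrightarrow> big2 H S2 \<Longrightarrow> big2 (S2 - G2) S2"
  shows "small big12 (G1 \<times> G2) (S1 \<times> S2) \<longleftrightarrow> small big1 G1 S1 \<or> small big2 G2 S2"
proof
  assume "small big12 (G1 \<times> G2) (S1 \<times> S2)"
  then obtain H1 H2 where H: "H1 \<subseteq> S1" "H2 \<subseteq> S2" "big1 H1 S1" "big2 H2 S2"
    and "H1 \<times> H2 \<subseteq> S1 \<times> S2 - G1 \<times> G2"
    using big12_iff unfolding small_def by blast
  then have "H1 \<subseteq> S1 - G1 \<or> H2 \<subseteq> S2 - G2"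
    using Times_subset_Diff_Times_iff by blast
  then show "small big1 G1 S1 \<or> small big2 G2 S2"
    unfolding small_def using H mono1 mono2 by blast
next
  assume "small big1 G1 S1 \<or> small big2 G2 S2"
  then show "small big12 (G1 \<times> G2) (S1 \<times> S2)"
    unfolding small_def big12_iff using refl1 refl2 by blast
qed

theorem fact4p3:
  fixes X X' X'' :: "'i set"
    and V :: "'i \<Rightarrow> 'v set"
    and big1 big2 :: "('i \<Rightarrow> 'v) set \<Rightarrow> ('i \<Rightarrow> 'v) set \<Rightarrow> bool"
    and big12 :: "(('i \<Rightarrow> 'v) \<times> ('i \<Rightarrow> 'v)) set \<Rightarrow> (('i \<Rightarrow> 'v) \<times> ('i \<Rightarrow> 'v)) set \<Rightarrow> bool"
    and \<Sigma>1 \<Gamma>1 \<Sigma>2 \<Gamma>2 :: "('i \<Rightarrow> 'v) set"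
  assumes cover: "X' \<union> X'' = X" and disj: "X' \<inter> X'' = {}"
    and nonempty: "\<forall>i\<in>X. V i \<noteq> {}"
    and refl1: "\<And>A. A \<subseteq> PiE X' V \<Longrightarrow> big1 A A"
    and mono1: "\<And>A B C. A \<subseteq> PiE X' V \<Longrightarrow> B \<subseteq> C \<Longrightarrow> C \<subseteq> A \<Longrightarrow> big1 B A \<Longrightarrow> big1 C A"
    and refl2: "\<And>A. A \<subseteq> PiE X'' V \<Longrightarrow> big2 A A"
    and mono2: "\<And>A B C. A \<subseteq> PiE X'' V \<Longrightarrow> B \<subseteq> C \<Longrightarrow> C \<subseteq> A \<Longrightarrow> big2 B A \<Longrightarrow> big2 C A"
    and refl12: "\<And>A. A \<subseteq> PiE X' V \<times> PiE X'' V \<Longrightarrow> big12 A A"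
    and mono12: "\<And>A B C. A \<subseteq> PiE X' V \<times> PiE X'' V \<Longrightarrow> B \<subseteq> C \<Longrightarrow> C \<subseteq> A \<Longrightarrow>
                   big12 B A \<Longrightarrow> big12 C A"
    and S1: "\<And>S1 S2 D. S1 \<subseteq> PiE X' V \<Longrightarrow> S2 \<subseteq> PiE X'' V \<Longrightarrow> D \<subseteq> S1 \<times> S2 \<Longrightarrow>
               big12 D (S1 \<times> S2) \<longleftrightarrow>
               (\<exists>G1 G2. G1 \<subseteq> S1 \<and> G2 \<subseteq> S2 \<and> big1 G1 S1 \<and> big2 G2 S2 \<and> G1 \<times> G2 \<subseteq> D)"
    and sub1: "\<Gamma>1 \<subseteq> \<Sigma>1" "\<Sigma>1 \<subseteq> PiE X' V"
    and sub2: "\<Gamma>2 \<subseteq> \<Sigma>2" "\<Sigma>2 \<subseteq> PiE X'' V"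
  shows "small big12 (\<Gamma>1 \<times> \<Gamma>2) (\<Sigma>1 \<times> \<Sigma>2) \<longleftrightarrow>
         small big1 \<Gamma>1 \<Sigma>1 \<or> small big2 \<Gamma>2 \<Sigma>2"
proof (rule small_Times_iff)
  show "big12 (\<Sigma>1 \<times> \<Sigma>2 - \<Gamma>1 \<times> \<Gamma>2) (\<Sigma>1 \<times> \<Sigma>2) \<longleftrightarrow>
      (\<exists>H1 H2. H1 \<subseteq> \<Sigma>1 \<and> H2 \<subseteq> \<Sigma>2 \<and> big1 H1 \<Sigma>1 \<and> big2 H2 \<Sigma>2 \<and> H1 \<times> H2 \<subseteq> \<Sigma>1 \<times> \<Sigma>2 - \<Gamma>1 \<times> \<Gamma>2)"
    using S1[OF sub1(2) sub2(2)] by blast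
  show "big1 \<Sigma>1 \<Sigma>1" using refl1[OF sub1(2)] .
  show "big2 \<Sigma>2 \<Sigma>2" using refl2[OF sub2(2)] .
  show "big1 (\<Sigma>1 - \<Gamma>1) \<Sigma>1" if "H \<subseteq> \<Sigma>1 - \<Gamma>1" "big1 H \<Sigma>1" for H
    using mono1[OF sub1(2) that(1) _ that(2)] by blast
  show "big2 (\<Sigma>2 - \<Gamma>2) \<Sigma>2" if "H \<subseteq> \<Sigma>2 - \<Gamma>2" "big2 H \<Sigma>2" for H
    using mono2[OF sub2(2) that(1) _ that(2)] by blast
qed

end
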